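(* Let $n\ge2$ and $\rho=\sum_{i=0}^n\lambda_i|D_n^i\rangle\langle D_n^i|$ with $\lambda_i\ge0$, $\sum_i\lambda_i=1$. Then $L(\rho)=n$ if and only if at least one of the following holds: (i) $\lambda_0\lambda_n\neq0$; (ii) $\lambda_i\neq0$ for every odd $i\in\{0,\dots,n\}$; (iii) $\lambda_i\ne0$ for every even $i\in\{0,\dots,n\}$.
   Context: Dicke states: $|D_n^i\rangle=\binom{n}{i}^{-1/2}\sum_{s\in\{0,1\}^n,\ \sum_js_j=i}|s_1\rangle\otimes\cdots\otimes|s_n\rangle$. For $S\subseteq[n]$, $\rho_S$ is the partial trace of $\rho$ over qubits outside $S$; $\mathcal C(\rho,\mathcal S)=\{\sigma\text{ density matrix}:\sigma_S=\rho_S\ \forall S\in\mathcal S\}$; $\mathcal S$ determines $\rho$ if $\mathcal C(\rho,\mathcal S)=\{\rho\}$; $L(\rho)=\min_{\mathcal S\text{ determines }\rho}\max_{S\in\mathcal S}|S|$. *)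

theory Defs
  imports Complex_Main
begin

text \<open>Computational basis states of n qubits: bit strings s : {0..<n} -> {0,1},
  encoded as functions nat => bool that are False outside {0..<n}
  (True = |1>, False = |0>).  An operator on (C^2)^{\<otimes>n} is a function
  of two basis labels, required to vanish outside the basis.\<close>

definition bits :: "nat \<Rightarrow> (nat \<Rightarrow> bool) set" where
  "bits n = {s. \<forall>i. n \<le> i \<longrightarrow> \<not> s i}"

type_synonym op = "(nat \<Rightarrow> bool) \<Rightarrow> (nat \<Rightarrow> bool) \<Rightarrow> complex"

definition density :: "nat \<Rightarrow> op \<Rightarrow> bool" where
  "density n \<sigma> \<longleftrightarrow>
     (\<forall>s t. (s \<notin> bits n \<or> t \<notin> bits n) \<longrightarrow> \<sigma> s t = 0) \<and>
     (\<forall>s t. \<sigma> t s = cnj (\<sigma> s t)) \<and>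
     (\<forall>v :: (nat \<Rightarrow> bool) \<Rightarrow> complex.
        let q = (\<Sum>s\<in>bits n. \<Sum>t\<in>bits n. cnj (v s) * \<sigma> s t * v t)
        in Im q = 0 \<and> Re q \<ge> 0) \<and>
     (\<Sum>s\<in>bits n. \<sigma> s s) = 1"

text \<open>Partial trace over the qubits outside S: the reduced operator acts on bit
  strings supported in S; a basis label of the full system is the disjoint
  union of a label on S and a label c on the complement [n]-S.\<close>

definition ptrace :: "nat \<Rightarrow> nat set \<Rightarrow> op \<Rightarrow> op" where
  "ptrace n S \<sigma> a b =
     (if (\<forall>i. a i \<longrightarrow> i \<in> S \<and> i < n) \<and> (\<forall>i. b i \<longrightarrow> i \<in> S \<and> i < n)
      then (\<Sum>c\<in>{c\<in>bits n. \<forall>i\<in>S. \<not> c i}. \<sigma> (\<lambda>i. a i \<or> c i) (\<lambda>i. b i \<or> c i))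
      else 0)"

definition compat :: "nat \<Rightarrow> op \<Rightarrow> nat set set \<Rightarrow> op set" where
  "compat n \<rho> SS = {\<sigma>. density n \<sigma> \<and> (\<forall>S\<in>SS. ptrace n S \<sigma> = ptrace n S \<rho>)}"

definition determines :: "nat \<Rightarrow> nat set set \<Rightarrow> op \<Rightarrow> bool" where
  "determines n SS \<rho> \<longleftrightarrow> compat n \<rho> SS = {\<rho>}"

definition Lval :: "nat \<Rightarrow> op \<Rightarrow> nat" where
  "Lval n \<rho> = (LEAST k. \<exists>SS. SS \<subseteq> Pow {0..<n} \<and> determines n SS \<rho> \<and>
                              (\<forall>S\<in>SS. card S \<le> k))"

definition dicke :: "nat \<Rightarrow> nat \<Rightarrow> (nat \<Rightarrow> bool) \<Rightarrow> complex" where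
  "dicke n i s = (if s \<in> bits n \<and> card {j. j < n \<and> s j} = i
                  then complex_of_real (1 / sqrt (real (n choose i))) else 0)"

definition dicke_mix :: "nat \<Rightarrow> (nat \<Rightarrow> real) \<Rightarrow> op" where
  "dicke_mix n lam s t = (\<Sum>i\<le>n. complex_of_real (lam i) * dicke n i s * cnj (dicke n i t))"

end

theory Submission
  imports Defs "HOL-Combinatorics.Transposition"
begin

text \<open>If every set of a family misses some qubit, then any Hermitian perturbation whose partial
  trace over each single qubit vanishes leaves all the prescribed marginals unchanged. Two such
  perturbations are available for a Dicke mixture: the alternating combination
  \<open>\<Sum>\<^sub>i (-1)\<^sup>i C(n,i) |D\<^sub>n\<^sup>i\<rangle>\<langle>D\<^sub>n\<^sup>i|\<close>, which keeps \<open>\<rho>\<close> positive for a small coefficient of the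
  right sign when all odd or all even \<open>\<lambda>\<^sub>i\<close> are positive, and the GHZ coherence
  \<open>|0\<dots>0\<rangle>\<langle>1\<dots>1| + |1\<dots>1\<rangle>\<langle>0\<dots>0|\<close>, which is dominated by \<open>\<lambda>\<^sub>0\<close> and \<open>\<lambda>\<^sub>n\<close> when both are positive.

  Conversely, if all three fail, the \<open>(n-1)\<close>-body marginals already determine \<open>\<rho>\<close>. They fix the
  diagonal up to an offset of alternating sign \<open>(-1)\<^sup>w\<close>, which must vanish because \<open>\<rho>\<close> has zero
  diagonal entries of both parities. For \<open>n \<ge> 3\<close> they force every compatible state to be
  supported on the symmetric subspace, so its entries depend only on the two weights; tracing out
  one qubit then links the entries at weights \<open>(a, b)\<close> and \<open>(a + 1, b + 1)\<close>, and the zero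
  diagonal at weight \<open>0\<close> or \<open>n\<close> kills all coherences between different weights. For \<open>n = 2\<close> the state
  is a single basis state, fixed by its diagonal.\<close>

section \<open>Bit strings and their weight\<close>

definition weight :: "nat \<Rightarrow> (nat \<Rightarrow> bool) \<Rightarrow> nat" where
  "weight n s = card {j. j < n \<and> s j}"

definition prefix_ones :: "nat \<Rightarrow> nat \<Rightarrow> bool" where
  "prefix_ones i = (\<lambda>k. k < i)"

lemma bits_less: "s \<in> bits n \<Longrightarrow> s j \<Longrightarrow> j < n"
  unfolding bits_def using not_le by blast

lemma bits_eqI: "s \<in> bits n \<Longrightarrow> t \<in> bits n \<Longrightarrow> (\<And>j. j < n \<Longrightarrow> s j = t j) \<Longrightarrow> s = t"
  by (rule ext) (metis bits_less)

lemma bits_eq_image_Pow: "bits n = (\<lambda>B j. j \<in> B) ` Pow {0..<n}"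
proof (intro equalityI subsetI)
  fix s assume "s \<in> bits n"
  then have "s = (\<lambda>j. j \<in> {j. s j})" and "{j. s j} \<in> Pow {0..<n}"
    using bits_less by auto
  then show "s \<in> (\<lambda>B j. j \<in> B) ` Pow {0..<n}" by (rule image_eqI)
qed (auto simp: bits_def)

lemma finite_bits [simp]: "finite (bits n)"
  by (simp add: bits_eq_image_Pow)

lemma zero_in_bits [simp]: "(\<lambda>_. False) \<in> bits n"
  by (simp add: bits_def)

lemma fun_upd_in_bits: "s \<in> bits n \<Longrightarrow> j < n \<or> \<not> v \<Longrightarrow> s(j := v) \<in> bits n"
  by (auto simp: bits_def)

lemma prefix_ones_in_bits: "i \<le> n \<Longrightarrow> prefix_ones i \<in> bits n"
  by (auto simp: prefix_ones_def bits_def)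

lemma transpose_in_bits: "s \<in> bits n \<Longrightarrow> k < n \<Longrightarrow> l < n \<Longrightarrow> s \<circ> transpose k l \<in> bits n"
  by (auto simp: bits_def transpose_def)

lemma weight_le: "weight n s \<le> n"
  unfolding weight_def by (rule order.trans[OF card_mono[of "{..<n}"]]) auto

lemma weight_zero [simp]: "weight n (\<lambda>_. False) = 0"
  by (simp add: weight_def)

lemma weight_fun_upd_True: "j < n \<Longrightarrow> \<not> s j \<Longrightarrow> weight n (s(j := True)) = Suc (weight n s)"
proof -
  assume "j < n" "\<not> s j"
  then have "{k. k < n \<and> (s(j := True)) k} = insert j {k. k < n \<and> s k}"
    and "j \<notin> {k. k < n \<and> s k}" by auto
  then show ?thesis unfolding weight_def by simp
qed

lemma weight_fun_upd_False: "j < n \<Longrightarrow> s j \<Longrightarrow> weight n s = Suc (weight n (s(j := False)))"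
  using weight_fun_upd_True[of j n "s(j := False)"] by (simp add: fun_upd_idem)

lemma weight_prefix_ones [simp]: "i \<le> n \<Longrightarrow> weight n (prefix_ones i) = i"
proof -
  assume "i \<le> n"
  then have "{j. j < n \<and> prefix_ones i j} = {..<i}" by (auto simp: prefix_ones_def)
  then show ?thesis by (simp add: weight_def)
qed

lemma weight_eq_0_iff: "s \<in> bits n \<Longrightarrow> weight n s = 0 \<longleftrightarrow> s = (\<lambda>_. False)"
  by (auto simp: weight_def card_eq_0_iff intro!: bits_eqI)

lemma weight_eq_n_iff: "s \<in> bits n \<Longrightarrow> weight n s = n \<longleftrightarrow> s = prefix_ones n"
proof
  assume s: "s \<in> bits n" and "weight n s = n"
  then have "{j. j < n \<and> s j} = {..<n}"
    by (intro card_subset_eq) (auto simp: weight_def)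
  then show "s = prefix_ones n"
    using s by (intro bits_eqI prefix_ones_in_bits) (auto simp: prefix_ones_def)
qed simp

lemma weight_transpose: "k < n \<Longrightarrow> l < n \<Longrightarrow> weight n (s \<circ> transpose k l) = weight n s"
proof -
  assume "k < n" "l < n"
  then have "{j. j < n \<and> (s \<circ> transpose k l) j} = transpose k l ` {j. j < n \<and> s j}"
    by (auto simp: transpose_def image_iff)
  then show ?thesis unfolding weight_def by (simp add: card_image)
qed

lemma weight_eq_imp_ex_diff:
  assumes "s \<in> bits n" "t \<in> bits n" "weight n s = weight n t" "s \<noteq> t"
  shows "\<exists>k<n. s k \<and> \<not> t k"
proof (rule ccontr)
  assume "\<not> ?thesis"
  then have "{i. i < n \<and> s i} = {i. i < n \<and> t i}"
    using assms(3) by (intro card_subset_eq) (auto simp: weight_def)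
  then have "s = t"
    using assms(1,2) by (intro bits_eqI) auto
  then show False using assms(4) by simp
qed

text \<open>Induction on the Hamming distance: swapping a position where only \<open>s\<close> has a one with a
  position where only \<open>t\<close> has one brings \<open>s\<close> closer to \<open>t\<close>.\<close>

lemma transpose_invariant_on_weight_class:
  assumes inv: "\<And>s k l. s \<in> bits n \<Longrightarrow> k < n \<Longrightarrow> l < n \<Longrightarrow> P (s \<circ> transpose k l) = P s"
    and s: "s \<in> bits n" and t: "t \<in> bits n" and w: "weight n s = weight n t"
  shows "P s = P t"
  using s w
proof (induction "card {i. i < n \<and> s i \<noteq> t i}" arbitrary: s rule: less_induct)
  case less
  show ?case
  proof (cases "s = t")
    case False
    obtain k where k: "k < n" "s k" "\<not> t k"
      using weight_eq_imp_ex_diff[OF less.prems(1) t less.prems(2) False] by blast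
    obtain l where l: "l < n" "t l" "\<not> s l"
      using weight_eq_imp_ex_diff[OF t less.prems(1) less.prems(2)[symmetric]] False by blast
    let ?s = "s \<circ> transpose k l"
    have "{i. i < n \<and> ?s i \<noteq> t i} \<subseteq> {i. i < n \<and> s i \<noteq> t i} - {k}"
      using k l by (auto simp: transpose_def)
    then have "card {i. i < n \<and> ?s i \<noteq> t i} \<le> card ({i. i < n \<and> s i \<noteq> t i} - {k})"
      by (intro card_mono) auto
    also have "\<dots> < card {i. i < n \<and> s i \<noteq> t i}"
      using k by (intro card_Diff1_less) auto
    finally have "P ?s = P t"
      using less.prems k(1) l(1) by (intro less.hyps) (simp_all add: transpose_in_bits weight_transpose)
    then show ?thesis using inv[OF less.prems(1) k(1) l(1)] by simp
  qed simp
qed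

section \<open>Positive operators and their quadratic form\<close>

definition qform :: "nat \<Rightarrow> op \<Rightarrow> ((nat \<Rightarrow> bool) \<Rightarrow> complex) \<Rightarrow> complex" where
  "qform n \<sigma> v = (\<Sum>s\<in>bits n. \<Sum>t\<in>bits n. cnj (v s) * \<sigma> s t * v t)"

definition apply_op :: "nat \<Rightarrow> op \<Rightarrow> ((nat \<Rightarrow> bool) \<Rightarrow> complex) \<Rightarrow> (nat \<Rightarrow> bool) \<Rightarrow> complex" where
  "apply_op n \<sigma> v r = (\<Sum>t\<in>bits n. \<sigma> r t * v t)"

lemma density_iff_qform: "density n \<sigma> \<longleftrightarrow>
     (\<forall>s t. (s \<notin> bits n \<or> t \<notin> bits n) \<longrightarrow> \<sigma> s t = 0) \<and>
     (\<forall>s t. \<sigma> t s = cnj (\<sigma> s t)) \<and>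
     (\<forall>v. Im (qform n \<sigma> v) = 0 \<and> Re (qform n \<sigma> v) \<ge> 0) \<and>
     (\<Sum>s\<in>bits n. \<sigma> s s) = 1"
  unfolding density_def qform_def Let_def by simp

lemma density_zero_outside: "density n \<sigma> \<Longrightarrow> s \<notin> bits n \<or> t \<notin> bits n \<Longrightarrow> \<sigma> s t = 0"
  unfolding density_iff_qform by blast

lemma density_hermitian: "density n \<sigma> \<Longrightarrow> \<sigma> t s = cnj (\<sigma> s t)"
  unfolding density_iff_qform by blast

lemma density_qform: "density n \<sigma> \<Longrightarrow> Im (qform n \<sigma> v) = 0 \<and> Re (qform n \<sigma> v) \<ge> 0"
  unfolding density_iff_qform by blast

lemma density_trace: "density n \<sigma> \<Longrightarrow> (\<Sum>s\<in>bits n. \<sigma> s s) = 1"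
  unfolding density_iff_qform by blast

lemma qform_add_scaled: "qform n (\<lambda>s t. \<sigma> s t + x * \<tau> s t) v = qform n \<sigma> v + x * qform n \<tau> v"
  by (simp add: qform_def algebra_simps sum.distrib sum_distrib_left)

lemma qform_add_point:
  assumes herm: "\<And>s t. \<sigma> t s = cnj (\<sigma> s t)" and r: "r \<in> bits n"
  shows "qform n \<sigma> (\<lambda>s. v s + (if s = r then x else 0)) = qform n \<sigma> v
           + cnj x * apply_op n \<sigma> v r + x * cnj (apply_op n \<sigma> v r) + cnj x * \<sigma> r r * x"
proof -
  define d where "d = (\<lambda>s. if s = r then x else 0)"
  have "qform n \<sigma> (\<lambda>s. v s + d s) = qform n \<sigma> v
      + (\<Sum>s\<in>bits n. \<Sum>t\<in>bits n. cnj (d s) * \<sigma> s t * v t)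
      + (\<Sum>s\<in>bits n. \<Sum>t\<in>bits n. cnj (v s) * \<sigma> s t * d t)
      + (\<Sum>s\<in>bits n. \<Sum>t\<in>bits n. cnj (d s) * \<sigma> s t * d t)"
    by (simp add: qform_def algebra_simps sum.distrib)
  also have "(\<Sum>s\<in>bits n. \<Sum>t\<in>bits n. cnj (d s) * \<sigma> s t * v t)
      = (\<Sum>s\<in>bits n. if s = r then cnj x * apply_op n \<sigma> v r else 0)"
    by (intro sum.cong) (auto simp: d_def apply_op_def sum_distrib_left mult_ac)
  also have "(\<Sum>s\<in>bits n. \<Sum>t\<in>bits n. cnj (v s) * \<sigma> s t * d t)
      = (\<Sum>s\<in>bits n. x * cnj (\<sigma> r s * v s))"
    using r by (intro sum.cong) (simp_all add: d_def herm[of r] if_distrib cong: if_cong)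
  also have "\<dots> = x * cnj (apply_op n \<sigma> v r)"
    by (simp add: apply_op_def sum_distrib_left)
  also have "(\<Sum>s\<in>bits n. \<Sum>t\<in>bits n. cnj (d s) * \<sigma> s t * d t)
      = (\<Sum>s\<in>bits n. if s = r then cnj x * \<sigma> r r * x else 0)"
    using r by (intro sum.cong) (auto simp: d_def if_distrib cong: if_cong)
  finally show ?thesis using r by (simp add: d_def)
qed

lemma qform_point:
  assumes "\<And>s t. \<sigma> t s = cnj (\<sigma> s t)" and "r \<in> bits n"
  shows "qform n \<sigma> (\<lambda>s. if s = r then x else 0) = cnj x * \<sigma> r r * x"
  using qform_add_point[OF assms, where v = "\<lambda>_. 0" and x = x] by (simp add: qform_def apply_op_def)

lemma density_diag:
  assumes \<sigma>: "density n \<sigma>"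
  shows "Im (\<sigma> s s) = 0 \<and> Re (\<sigma> s s) \<ge> 0"
proof (cases "s \<in> bits n")
  case True
  then have "qform n \<sigma> (\<lambda>t. if t = s then 1 else 0) = \<sigma> s s"
    using qform_point[where \<sigma> = \<sigma>, OF density_hermitian[OF \<sigma>] True, where x = 1] by simp
  then show ?thesis using density_qform[OF \<sigma>, of "\<lambda>t. if t = s then 1 else 0"] by simp
qed (simp add: density_zero_outside[OF \<sigma>])

text \<open>If \<open>\<sigma> v\<close> had a nonzero component at \<open>r\<close>, moving \<open>v\<close> slightly along \<open>-(\<sigma> v)(r)\<close> at \<open>r\<close>
  would make the form negative.\<close>

lemma density_qform_eq_0_imp_apply_op_eq_0:
  assumes \<sigma>: "density n \<sigma>" and v: "qform n \<sigma> v = 0"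
  shows "apply_op n \<sigma> v r = 0"
proof (cases "r \<in> bits n")
  case r: True
  define B where "B = apply_op n \<sigma> v r"
  define c where "c = Re (\<sigma> r r)"
  define t where "t = 1 / (c + 1)"
  have c: "c \<ge> 0" "\<sigma> r r = of_real c"
    using density_diag[OF \<sigma>, of r] by (simp_all add: c_def complex_eq_iff)
  have t: "t > 0" "t * c < 2"
    using c by (simp_all add: t_def field_simps)
  have "qform n \<sigma> (\<lambda>s. v s + (if s = r then of_real (- t) * B else 0))
      = of_real (t * (cmod B)^2 * (t * c - 2))"
    using qform_add_point[where \<sigma> = \<sigma>, OF density_hermitian[OF \<sigma>] r, where v = v and x = "of_real (- t) * B"]
      complex_norm_square[of B]
    by (simp add: v c(2) B_def[symmetric] algebra_simps)
  moreover have "t * (cmod B)^2 * (t * c - 2) < 0" if "B \<noteq> 0"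
    using t that by (simp add: mult_pos_neg)
  ultimately have "B = 0"
    using density_qform[OF \<sigma>, of "\<lambda>s. v s + (if s = r then of_real (- t) * B else 0)"]
    by fastforce
  then show ?thesis by (simp add: B_def)
qed (simp add: apply_op_def density_zero_outside[OF \<sigma>])

lemma apply_op_point: "u \<in> bits n \<Longrightarrow> apply_op n \<sigma> (\<lambda>s. if s = u then x else 0) r = \<sigma> r u * x"
  by (simp add: apply_op_def if_distrib cong: if_cong)

lemma density_diag_eq_0:
  assumes \<sigma>: "density n \<sigma>" and u: "\<sigma> u u = 0"
  shows "\<sigma> r u = 0" and "\<sigma> u r = 0"
proof -
  show "\<sigma> r u = 0"
  proof (cases "u \<in> bits n")
    case True
    have "qform n \<sigma> (\<lambda>s. if s = u then 1 else 0) = 0"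
      using qform_point[where \<sigma> = \<sigma>, OF density_hermitian[OF \<sigma>] True] u by simp
      then show ?thesis
      using density_qform_eq_0_imp_apply_op_eq_0[OF \<sigma>, of _ r] apply_op_point[OF True, of \<sigma> 1 r]
      by simp
  qed (simp add: density_zero_outside[OF \<sigma>])
  then show "\<sigma> u r = 0" using density_hermitian[OF \<sigma>, of r u] by simp
qed

definition diff_form :: "op \<Rightarrow> (nat \<Rightarrow> bool) \<Rightarrow> (nat \<Rightarrow> bool) \<Rightarrow> complex" where
  "diff_form \<sigma> u w = \<sigma> u u - \<sigma> u w - \<sigma> w u + \<sigma> w w"

lemma qform_diff:
  assumes herm: "\<And>s t. \<sigma> t s = cnj (\<sigma> s t)" and "u \<in> bits n" "w \<in> bits n"
  shows "qform n \<sigma> (\<lambda>s. (if s = u then 1 else 0) + (if s = w then - 1 else 0)) = diff_form \<sigma> u w"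
  using qform_add_point[where \<sigma> = \<sigma>, OF herm assms(3), where v = "\<lambda>s. if s = u then 1 else 0"]
    qform_point[where \<sigma> = \<sigma>, OF herm assms(2)] apply_op_point[OF assms(2)] herm[of w u]
  by (simp add: diff_form_def)

lemma density_diff_form:
  assumes "density n \<sigma>" "u \<in> bits n" "w \<in> bits n"
  shows "Im (diff_form \<sigma> u w) = 0 \<and> Re (diff_form \<sigma> u w) \<ge> 0"
  using density_qform[OF assms(1)] qform_diff[where \<sigma> = \<sigma>, OF density_hermitian[OF assms(1)] assms(2,3)]
  by metis

lemma density_diff_form_eq_0:
  assumes \<sigma>: "density n \<sigma>" and uw: "u \<in> bits n" "w \<in> bits n" and "diff_form \<sigma> u w = 0"
  shows "\<sigma> r u = \<sigma> r w"
proof -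
  let ?v = "\<lambda>s. (if s = u then 1 else 0) + (if s = w then - 1 else 0)"
  have "apply_op n \<sigma> ?v r = 0"
    using density_qform_eq_0_imp_apply_op_eq_0[OF \<sigma>] assms(4)
      qform_diff[where \<sigma> = \<sigma>, OF density_hermitian[OF \<sigma>] uw] by simp
  moreover have "apply_op n \<sigma> ?v r = apply_op n \<sigma> (\<lambda>s. if s = u then 1 else 0) r
      + apply_op n \<sigma> (\<lambda>s. if s = w then - 1 else 0) r"
    by (simp add: apply_op_def distrib_left sum.distrib)
  ultimately show ?thesis using apply_op_point[OF uw(1)] apply_op_point[OF uw(2)] by simp
qed

section \<open>Dicke mixtures\<close>

lemma weight_indicator: "B \<subseteq> {0..<n} \<Longrightarrow> weight n (\<lambda>j. j \<in> B) = card B"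
  unfolding weight_def by (rule arg_cong[where f = card]) auto

lemma card_weight_class: "card {s \<in> bits n. weight n s = i} = n choose i"
proof -
  have "{s \<in> bits n. weight n s = i} = (\<lambda>B j. j \<in> B) ` {B. B \<subseteq> {0..<n} \<and> card B = i}"
    by (auto simp: bits_eq_image_Pow weight_indicator)
  moreover have "inj_on (\<lambda>B j. j \<in> B) {B. B \<subseteq> {0..<n} \<and> card B = i}"
    by (rule inj_onI) (metis Collect_mem_eq)
  ultimately show ?thesis by (simp add: card_image n_subsets)
qed

lemma sum_bits_weight: "(\<Sum>s\<in>bits n. f (weight n s)) = (\<Sum>i\<le>n. of_nat (n choose i) * f i)"
proof -
  have "(\<Sum>s\<in>bits n. f (weight n s)) = (\<Sum>i\<le>n. \<Sum>s\<in>{s \<in> bits n. weight n s = i}. f (weight n s))"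
    by (rule sum.group[symmetric]) (auto simp: weight_le)
  also have "\<dots> = (\<Sum>i\<le>n. \<Sum>s\<in>{s \<in> bits n. weight n s = i}. f i)"
    by (intro sum.cong) auto
  finally show ?thesis by (simp add: card_weight_class)
qed

lemma dicke_mix_eq: "dicke_mix n lam s t =
    (if s \<in> bits n \<and> t \<in> bits n \<and> weight n s = weight n t
     then of_real (lam (weight n s) / real (n choose weight n s)) else 0)"
proof -
  let ?c = "\<lambda>i. of_real (lam i) * dicke n i s * cnj (dicke n i t)"
  have "dicke_mix n lam s t = (\<Sum>i\<le>n. if i = weight n s then ?c i else 0)"
    unfolding dicke_mix_def by (rule sum.cong) (auto simp: dicke_def weight_def)
  also have "\<dots> = ?c (weight n s)"
    using weight_le[of n s] by simp
  also have "\<dots> = (if s \<in> bits n \<and> t \<in> bits n \<and> weight n s = weight n t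
     then of_real (lam (weight n s) / real (n choose weight n s)) else 0)"
  proof -
    have "1 / sqrt (real (n choose weight n s)) * (1 / sqrt (real (n choose weight n s)))
       = 1 / real (n choose weight n s)"
      using weight_le[of n s] by (simp add: real_sqrt_mult[symmetric])
    then show ?thesis by (auto simp: dicke_def weight_def[symmetric] simp flip: of_real_mult)
  qed
  finally show ?thesis .
qed

lemma qform_dicke_mix:
  "qform n (dicke_mix n lam) v = of_real (\<Sum>i\<le>n. lam i * (cmod (\<Sum>t\<in>bits n. dicke n i t * v t))^2)"
proof -
  have real: "cnj (dicke n i s) = dicke n i s" for i s
    by (simp add: dicke_def)
  have "qform n (dicke_mix n lam) v = (\<Sum>s\<in>bits n. \<Sum>t\<in>bits n. \<Sum>i\<le>n.
      of_real (lam i) * (cnj (v s) * dicke n i s) * (dicke n i t * v t))"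
    unfolding qform_def dicke_mix_def by (simp add: sum_distrib_left sum_distrib_right real mult_ac)
  also have "\<dots> = (\<Sum>i\<le>n. \<Sum>s\<in>bits n. \<Sum>t\<in>bits n.
      of_real (lam i) * (cnj (v s) * dicke n i s) * (dicke n i t * v t))"
    by (subst sum.swap) (simp add: sum.swap[of _ "bits n" "{..n}"])
  also have "\<dots> = (\<Sum>i\<le>n. of_real (lam i) *
      (cnj (\<Sum>t\<in>bits n. dicke n i t * v t) * (\<Sum>t\<in>bits n. dicke n i t * v t)))"
    by (simp add: sum_distrib_left sum_distrib_right real mult_ac)
  also have "\<dots> = of_real (\<Sum>i\<le>n. lam i * (cmod (\<Sum>t\<in>bits n. dicke n i t * v t))^2)"
    using complex_norm_square by (simp only: of_real_sum of_real_mult mult.commute)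
  finally show ?thesis .
qed

lemma density_dicke_mix:
  assumes "\<forall>i\<le>n. lam i \<ge> 0" and "(\<Sum>i\<le>n. lam i) = 1"
  shows "density n (dicke_mix n lam)"
  unfolding density_iff_qform
proof (intro conjI allI impI)
  show "Im (qform n (dicke_mix n lam) v) = 0" and "Re (qform n (dicke_mix n lam) v) \<ge> 0" for v
    using assms(1) by (simp_all add: qform_dicke_mix del: of_real_sum) (auto intro!: sum_nonneg)
  have "(\<Sum>s\<in>bits n. dicke_mix n lam s s) = (\<Sum>i\<le>n. of_nat (n choose i) * of_real (lam i / (n choose i)))"
    by (subst sum_bits_weight[symmetric]) (simp add: dicke_mix_eq)
  also have "\<dots> = of_real (\<Sum>i\<le>n. lam i)"
    by simp
  finally show "(\<Sum>s\<in>bits n. dicke_mix n lam s s) = 1"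
    using assms(2) by simp
qed (auto simp: dicke_mix_eq)

section \<open>Partial traces\<close>

definition outer_labels :: "nat \<Rightarrow> nat set \<Rightarrow> (nat \<Rightarrow> bool) set" where
  "outer_labels n S = {c \<in> bits n. \<forall>i\<in>S. \<not> c i}"

lemma ptrace_eq: "ptrace n S \<sigma> a b =
     (if (\<forall>i. a i \<longrightarrow> i \<in> S \<and> i < n) \<and> (\<forall>i. b i \<longrightarrow> i \<in> S \<and> i < n)
      then (\<Sum>c\<in>outer_labels n S. \<sigma> (\<lambda>i. a i \<or> c i) (\<lambda>i. b i \<or> c i)) else 0)"
  unfolding ptrace_def outer_labels_def by simp

lemma ptrace_add_scaled:
  "ptrace n S (\<lambda>s t. \<sigma> s t + x * \<tau> s t) a b = ptrace n S \<sigma> a b + x * ptrace n S \<tau> a b"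
proof -
  define P where "P \<longleftrightarrow> (\<forall>i. a i \<longrightarrow> i \<in> S \<and> i < n) \<and> (\<forall>i. b i \<longrightarrow> i \<in> S \<and> i < n)"
  show ?thesis
    unfolding ptrace_eq P_def[symmetric] by (simp add: sum.distrib sum_distrib_left)
qed

lemma outer_labels_full: "outer_labels n {0..<n} = {\<lambda>_. False}"
  by (auto simp: outer_labels_def intro: bits_eqI)

lemma outer_labels_deletion:
  assumes "j < n"
  shows "outer_labels n ({0..<n} - {j}) = {\<lambda>_. False, (\<lambda>_. False)(j := True)}"
proof (intro equalityI subsetI)
  fix c assume c: "c \<in> outer_labels n ({0..<n} - {j})"
  then have "c = (if c j then (\<lambda>_. False)(j := True) else (\<lambda>_. False))"
    using assms by (intro bits_eqI) (auto simp: outer_labels_def intro: fun_upd_in_bits)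
  then show "c \<in> {\<lambda>_. False, (\<lambda>_. False)(j := True)}" by (auto split: if_splits)
qed (use assms in \<open>auto simp: outer_labels_def intro: fun_upd_in_bits\<close>)

lemma ptrace_full:
  assumes "\<And>s t. s \<notin> bits n \<or> t \<notin> bits n \<Longrightarrow> \<sigma> s t = 0"
  shows "ptrace n {0..<n} \<sigma> = \<sigma>"
proof (intro ext)
  fix a b
  have "(\<forall>i. a i \<longrightarrow> i \<in> {0..<n} \<and> i < n) \<and> (\<forall>i. b i \<longrightarrow> i \<in> {0..<n} \<and> i < n)
    \<longleftrightarrow> a \<in> bits n \<and> b \<in> bits n"
    by (auto simp: bits_def not_le[symmetric])
  then show "ptrace n {0..<n} \<sigma> a b = \<sigma> a b"
    using assms[of a b] by (simp add: ptrace_eq outer_labels_full)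
qed

lemma ptrace_deletion:
  assumes "j < n" "a \<in> bits n" "b \<in> bits n" "\<not> a j" "\<not> b j"
  shows "ptrace n ({0..<n} - {j}) \<sigma> a b = \<sigma> a b + \<sigma> (a(j := True)) (b(j := True))"
proof -
  have "(\<lambda>_. False) \<noteq> ((\<lambda>_. False)(j := True) :: nat \<Rightarrow> bool)"
    by (metis fun_upd_same)
  moreover have "(\<lambda>i. a i \<or> ((\<lambda>_. False)(j := True)) i) = a(j := True)"
    and "(\<lambda>i. b i \<or> ((\<lambda>_. False)(j := True)) i) = b(j := True)"
    by auto
  ultimately show ?thesis
    using assms bits_less[of a n] bits_less[of b n]
    by (auto simp: ptrace_eq outer_labels_deletion simp del: fun_upd_apply)
qed

definition deletions :: "nat \<Rightarrow> nat set set" where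
  "deletions n = (\<lambda>j. {0..<n} - {j}) ` {..<n}"

lemma deletion_marginals_eqD:
  assumes "\<forall>S\<in>deletions n. ptrace n S \<sigma> = ptrace n S \<rho>"
    and "j < n" "a \<in> bits n" "b \<in> bits n" "\<not> a j" "\<not> b j"
  shows "\<sigma> a b + \<sigma> (a(j := True)) (b(j := True)) = \<rho> a b + \<rho> (a(j := True)) (b(j := True))"
  using assms(1) ptrace_deletion[OF assms(2-6), of \<sigma>] ptrace_deletion[OF assms(2-6), of \<rho>] assms(2)
  by (auto simp: deletions_def)

section \<open>Mixtures determined by their \<open>(n-1)\<close>-body marginals\<close>

lemma deletion_marginals_diag:
  assumes H: "\<forall>S\<in>deletions n. ptrace n S \<sigma> = ptrace n S \<rho>" and s: "s \<in> bits n"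
  shows "\<sigma> s s - \<rho> s s = (-1) ^ weight n s * (\<sigma> (\<lambda>_. False) (\<lambda>_. False) - \<rho> (\<lambda>_. False) (\<lambda>_. False))"
  using s
proof (induction "weight n s" arbitrary: s)
  case 0
  then show ?case by (simp add: weight_eq_0_iff)
next
  case (Suc k)
  then have "s \<noteq> (\<lambda>_. False)"
    using weight_eq_0_iff[of s n] by simp
  then obtain j where j: "j < n" "s j"
    using bits_less[OF Suc.prems] by auto
  let ?s = "s(j := False)"
  have "?s \<in> bits n" "weight n ?s = k"
    using Suc j by (simp_all add: fun_upd_in_bits weight_fun_upd_False[of j n s, OF j])
  moreover have "?s(j := True) = s"
    using j by (simp add: fun_upd_idem)
  moreover have "\<sigma> ?s ?s + \<sigma> (?s(j := True)) (?s(j := True)) = \<rho> ?s ?s + \<rho> (?s(j := True)) (?s(j := True))"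
    using deletion_marginals_eqD[OF H j(1) \<open>?s \<in> bits n\<close> \<open>?s \<in> bits n\<close>] by simp
  ultimately have "\<sigma> s s - \<rho> s s = - (\<sigma> ?s ?s - \<rho> ?s ?s)"
    by (auto simp: algebra_simps)
  then show ?case
    using Suc.hyps(1)[of ?s] Suc.hyps(2)[symmetric] \<open>?s \<in> bits n\<close> \<open>weight n ?s = k\<close> by simp
qed

text \<open>The alternating sign forces the common offset of the diagonal to be both \<open>\<ge> 0\<close> and
  \<open>\<le> 0\<close> as soon as \<open>\<rho>\<close> has a zero diagonal entry of each weight parity.\<close>

lemma deletion_marginals_determine_diag:
  assumes \<sigma>: "density n \<sigma>" and \<rho>: "density n \<rho>"
    and H: "\<forall>S\<in>deletions n. ptrace n S \<sigma> = ptrace n S \<rho>"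
    and odd: "u \<in> bits n" "odd (weight n u)" "\<rho> u u = 0"
    and even: "w \<in> bits n" "even (weight n w)" "\<rho> w w = 0"
  shows "\<sigma> s s = \<rho> s s"
proof -
  define D where "D = \<sigma> (\<lambda>_. False) (\<lambda>_. False) - \<rho> (\<lambda>_. False) (\<lambda>_. False)"
  note diag = deletion_marginals_diag[OF H, folded D_def]
  have "\<sigma> u u = - D" "\<sigma> w w = D"
    using diag[OF odd(1)] diag[OF even(1)] odd even by simp_all
  moreover have "Im D = 0"
    using density_diag[OF \<sigma>] density_diag[OF \<rho>] by (simp add: D_def)
  ultimately have "D = 0"
    using density_diag[OF \<sigma>, of u] density_diag[OF \<sigma>, of w] by (simp add: complex_eq_iff)
  then show ?thesis
    using diag[of s] density_zero_outside[OF \<sigma>, of s s] density_zero_outside[OF \<rho>, of s s]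
    by (cases "s \<in> bits n") simp_all
qed

lemma density_eq_of_diag_eq:
  assumes \<sigma>: "density n \<sigma>" and \<rho>: "density n \<rho>" and diag: "\<And>s. \<sigma> s s = \<rho> s s"
    and sparse: "\<And>s t. s \<noteq> t \<Longrightarrow> \<rho> s s = 0 \<or> \<rho> t t = 0"
  shows "\<sigma> = \<rho>"
proof (intro ext)
  fix s t
  show "\<sigma> s t = \<rho> s t"
  proof (cases "s = t")
    case False
    then show ?thesis
      using sparse[OF False] diag[of s] diag[of t]
        density_diag_eq_0[OF \<sigma>] density_diag_eq_0[OF \<rho>] by metis
  qed (simp add: diag)
qed

text \<open>For a positive operator this says that \<open>\<sigma>\<close> is supported on the permutation-symmetric
  subspace: it annihilates every difference of a basis vector and a transposed copy.\<close>

definition symmetric_support :: "nat \<Rightarrow> op \<Rightarrow> bool" where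
  "symmetric_support n \<sigma> \<longleftrightarrow> (\<forall>u\<in>bits n. \<forall>k<n. \<forall>l<n. diff_form \<sigma> u (u \<circ> transpose k l) = 0)"

lemma symmetric_support_dicke_mix: "symmetric_support n (dicke_mix n lam)"
  by (auto simp: symmetric_support_def diff_form_def dicke_mix_eq weight_transpose transpose_in_bits)

lemma symmetric_support_entry:
  assumes \<sigma>: "density n \<sigma>" and sym: "symmetric_support n \<sigma>"
    and bits: "s \<in> bits n" "t \<in> bits n" "s' \<in> bits n" "t' \<in> bits n"
    and weights: "weight n s = weight n s'" "weight n t = weight n t'"
  shows "\<sigma> s t = \<sigma> s' t'"
proof -
  have right: "\<sigma> x (y \<circ> transpose k l) = \<sigma> x y" if "y \<in> bits n" "k < n" "l < n" for x y k l
    using density_diff_form_eq_0[OF \<sigma> that(1) transpose_in_bits[OF that], of x] sym that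
    by (simp add: symmetric_support_def)
  have left: "\<sigma> (y \<circ> transpose k l) x = \<sigma> y x" if "y \<in> bits n" "k < n" "l < n" for x y k l
    using right[OF that, of x] density_hermitian[OF \<sigma>, of x y] density_hermitian[OF \<sigma>, of x "y \<circ> transpose k l"]
    by simp
  have "\<sigma> s t = \<sigma> s' t"
    using left bits(1,3) weights(1) by (rule transpose_invariant_on_weight_class)
  also have "\<dots> = \<sigma> s' t'"
    using right bits(2,4) weights(2) by (rule transpose_invariant_on_weight_class)
  finally show ?thesis .
qed

lemma diff_form_deletion_marginals:
  assumes H: "\<forall>S\<in>deletions n. ptrace n S \<sigma> = ptrace n S \<rho>"
    and j: "j < n" and uw: "u \<in> bits n" "w \<in> bits n" "\<not> u j" "\<not> w j"
  shows "diff_form \<sigma> u w + diff_form \<sigma> (u(j := True)) (w(j := True))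
       = diff_form \<rho> u w + diff_form \<rho> (u(j := True)) (w(j := True))"
proof -
  let ?u = "u(j := True)" and ?w = "w(j := True)"
  note flip = deletion_marginals_eqD[OF H j]
  have "diff_form \<sigma> u w + diff_form \<sigma> ?u ?w
      = (\<sigma> u u + \<sigma> ?u ?u) - (\<sigma> u w + \<sigma> ?u ?w) - (\<sigma> w u + \<sigma> ?w ?u) + (\<sigma> w w + \<sigma> ?w ?w)"
    by (simp add: diff_form_def algebra_simps)
  also have "\<dots> = (\<rho> u u + \<rho> ?u ?u) - (\<rho> u w + \<rho> ?u ?w) - (\<rho> w u + \<rho> ?w ?u) + (\<rho> w w + \<rho> ?w ?w)"
    by (simp only: flip[OF uw(1,1,3,3)] flip[OF uw(1,2,3,4)] flip[OF uw(2,1,4,3)] flip[OF uw(2,2,4,4)])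
  also have "\<dots> = diff_form \<rho> u w + diff_form \<rho> ?u ?w"
    by (simp add: diff_form_def algebra_simps)
  finally show ?thesis .
qed

text \<open>Symmetry of \<open>\<rho>\<close> is inherited through the \<open>(n-1)\<close>-marginals because a third qubit \<open>j\<close>,
  untouched by the transposition, can be traced out: the two diff forms with \<open>j\<close> cleared and set
  add up to the corresponding ones of \<open>\<rho>\<close>, which vanish, and both are nonnegative.\<close>

lemma symmetric_support_of_deletion_marginals:
  assumes n: "3 \<le> n" and \<sigma>: "density n \<sigma>" and \<rho>: "symmetric_support n \<rho>"
    and H: "\<forall>S\<in>deletions n. ptrace n S \<sigma> = ptrace n S \<rho>"
  shows "symmetric_support n \<sigma>"
  unfolding symmetric_support_def
proof (intro ballI allI impI)
  fix u k l assume u: "u \<in> bits n" and kl: "k < n" "l < n"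
  have "\<exists>j::nat. j < 3 \<and> j \<noteq> k \<and> j \<noteq> l"
    by presburger
  then obtain j where j: "j < 3" "j \<noteq> k" "j \<noteq> l"
    by blast
  let ?\<tau> = "transpose k l" and ?u = "u(j := False)"
  have bits: "?u \<in> bits n" "?u \<circ> ?\<tau> \<in> bits n" "?u(j := True) \<in> bits n"
    using u kl j n by (simp_all add: fun_upd_in_bits transpose_in_bits)
  have upd: "(?u \<circ> ?\<tau>)(j := True) = ?u(j := True) \<circ> ?\<tau>"
    using j by (auto simp: transpose_def fun_eq_iff)
  have not_j: "\<not> (?u \<circ> ?\<tau>) j"
    using j by (simp add: transpose_def)
  have "diff_form \<sigma> ?u (?u \<circ> ?\<tau>) + diff_form \<sigma> (?u(j := True)) (?u(j := True) \<circ> ?\<tau>)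
      = diff_form \<rho> ?u (?u \<circ> ?\<tau>) + diff_form \<rho> (?u(j := True)) (?u(j := True) \<circ> ?\<tau>)"
    using diff_form_deletion_marginals[OF H _ bits(1,2) _ not_j] j n unfolding upd by fastforce
  also have "\<dots> = 0"
    using \<rho> bits(1,3) kl unfolding symmetric_support_def by simp
  finally have "diff_form \<sigma> ?u (?u \<circ> ?\<tau>) + diff_form \<sigma> (?u(j := True)) (?u(j := True) \<circ> ?\<tau>) = 0" .
  moreover have "Im (diff_form \<sigma> ?u (?u \<circ> ?\<tau>)) = 0 \<and> Re (diff_form \<sigma> ?u (?u \<circ> ?\<tau>)) \<ge> 0"
    and "Im (diff_form \<sigma> (?u(j := True)) (?u(j := True) \<circ> ?\<tau>)) = 0
      \<and> Re (diff_form \<sigma> (?u(j := True)) (?u(j := True) \<circ> ?\<tau>)) \<ge> 0"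
    using density_diff_form[OF \<sigma>] bits kl by (simp_all add: transpose_in_bits)
  ultimately have "diff_form \<sigma> ?u (?u \<circ> ?\<tau>) = 0"
    and "diff_form \<sigma> (?u(j := True)) (?u(j := True) \<circ> ?\<tau>) = 0"
    by (simp_all add: complex_eq_iff)
  moreover have "u = ?u \<or> u = ?u(j := True)"
    by (cases "u j") (simp_all add: fun_upd_idem)
  ultimately show "diff_form \<sigma> u (u \<circ> ?\<tau>) = 0" by auto
qed

lemma off_diagonal_eq_0_from_bottom:
  fixes f :: "nat \<Rightarrow> nat \<Rightarrow> 'a::ab_group_add"
  assumes step: "\<And>a b. a < n \<Longrightarrow> b < n \<Longrightarrow> a \<noteq> b \<Longrightarrow> f a b + f (Suc a) (Suc b) = 0"
    and edge: "\<And>a b. a \<le> n \<Longrightarrow> b \<le> n \<Longrightarrow> a \<noteq> b \<Longrightarrow> min a b = 0 \<Longrightarrow> f a b = 0"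
  shows "a \<le> n \<Longrightarrow> b \<le> n \<Longrightarrow> a \<noteq> b \<Longrightarrow> f a b = 0"
proof (induction "min a b" arbitrary: a b)
  case 0
  then show ?case using edge[of a b] by simp
next
  case (Suc m)
  then obtain a' b' where ab: "a = Suc a'" "b = Suc b'"
    by (metis min_0L min_0R not0_implies_Suc old.nat.distinct(1))
  then have "f a' b' = 0"
    using Suc by (intro Suc.hyps) auto
  then show ?case
    using step[of a' b'] Suc.prems ab by simp
qed

lemma off_diagonal_eq_0_from_top:
  fixes f :: "nat \<Rightarrow> nat \<Rightarrow> 'a::ab_group_add"
  assumes step: "\<And>a b. a < n \<Longrightarrow> b < n \<Longrightarrow> a \<noteq> b \<Longrightarrow> f a b + f (Suc a) (Suc b) = 0"
    and edge: "\<And>a b. a \<le> n \<Longrightarrow> b \<le> n \<Longrightarrow> a \<noteq> b \<Longrightarrow> max a b = n \<Longrightarrow> f a b = 0"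
    and ab: "a \<le> n" "b \<le> n" "a \<noteq> b"
  shows "f a b = 0"
proof -
  let ?g = "\<lambda>a b. f (n - a) (n - b)"
  have "?g a' b' = 0" if "a' \<le> n" "b' \<le> n" "a' \<noteq> b'" for a' b'
  proof (rule off_diagonal_eq_0_from_bottom[where f = ?g, OF _ _ that])
    show "?g a b + ?g (Suc a) (Suc b) = 0" if "a < n" "b < n" "a \<noteq> b" for a b
      using step[of "n - Suc a" "n - Suc b"] that by (simp add: Suc_diff_Suc add.commute)
    show "?g a b = 0" if "a \<le> n" "b \<le> n" "a \<noteq> b" "min a b = 0" for a b
      using edge[of "n - a" "n - b"] that by auto
  qed
  from this[of "n - a" "n - b"] show ?thesis
    using ab by simp
qed

text \<open>Tracing out the last qubit relates the entries between weights \<open>a, b\<close> and \<open>a + 1, b + 1\<close>;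
  since \<open>\<rho>\<close> has no coherences between different weights, a zero at the edge of the weight range
  propagates along each off-diagonal.\<close>

lemma deletion_marginals_off_diagonal:
  assumes \<sigma>: "density n \<sigma>" and sym: "symmetric_support n \<sigma>"
    and H: "\<forall>S\<in>deletions n. ptrace n S \<sigma> = ptrace n S (dicke_mix n lam)"
    and edge: "\<sigma> (prefix_ones 0) (prefix_ones 0) = 0 \<or> \<sigma> (prefix_ones n) (prefix_ones n) = 0"
    and ab: "a \<le> n" "b \<le> n" "a \<noteq> b"
  shows "\<sigma> (prefix_ones a) (prefix_ones b) = 0"
proof -
  let ?f = "\<lambda>a b. \<sigma> (prefix_ones a) (prefix_ones b)"
  have step: "?f a b + ?f (Suc a) (Suc b) = 0" if "a < n" "b < n" "a \<noteq> b" for a b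
  proof -
    define j where "j = n - 1"
    have j: "j < n" "\<not> prefix_ones a j" "\<not> prefix_ones b j"
      using that by (auto simp: prefix_ones_def j_def)
    have bits: "prefix_ones a \<in> bits n" "prefix_ones b \<in> bits n"
      using that by (simp_all add: prefix_ones_in_bits)
    have weights: "weight n ((prefix_ones a)(j := True)) = Suc a"
      "weight n ((prefix_ones b)(j := True)) = Suc b"
      using weight_fun_upd_True[of j n "prefix_ones a", OF j(1,2)]
        weight_fun_upd_True[of j n "prefix_ones b", OF j(1,3)] that by simp_all
    have "?f a b + \<sigma> ((prefix_ones a)(j := True)) ((prefix_ones b)(j := True)) = 0"
      using deletion_marginals_eqD[OF H j(1) bits j(2,3)] that bits
      by (simp add: dicke_mix_eq weights)
    moreover have "\<sigma> ((prefix_ones a)(j := True)) ((prefix_ones b)(j := True)) = ?f (Suc a) (Suc b)"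
      using that j bits weights
      by (intro symmetric_support_entry[OF \<sigma> sym]) (simp_all add: fun_upd_in_bits prefix_ones_in_bits)
    ultimately show ?thesis by simp
  qed
  from edge show ?thesis
  proof
    assume "?f 0 0 = 0"
    note zero = density_diag_eq_0[OF \<sigma> this]
    show ?thesis
    proof (rule off_diagonal_eq_0_from_bottom[where f = ?f, OF step _ ab])
      show "?f c d = 0" if "min c d = 0" for c d
        using that zero by (cases "c = 0") (auto simp: min_def split: if_splits)
    qed
  next
    assume "?f n n = 0"
    note top = density_diag_eq_0[OF \<sigma> this]
    show ?thesis
    proof (rule off_diagonal_eq_0_from_top[where f = ?f, OF step _ ab])
      show "?f c d = 0" if "max c d = n" for c d
        using that top by (cases "c = n") (auto simp: max_def split: if_splits)
    qed
  qed
qed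

lemma dicke_mix_diag_sparse:
  assumes inner: "\<And>i. 0 < i \<Longrightarrow> i < n \<Longrightarrow> lam i = 0" and edge: "lam 0 * lam n = 0" and "s \<noteq> t"
  shows "dicke_mix n lam s s = 0 \<or> dicke_mix n lam t t = 0"
proof (rule ccontr)
  assume "\<not> ?thesis"
  then have "s \<in> bits n" "t \<in> bits n" "lam (weight n s) \<noteq> 0" "lam (weight n t) \<noteq> 0"
    by (auto simp: dicke_mix_eq split: if_splits)
  moreover have "weight n u = 0 \<or> weight n u = n" if "lam (weight n u) \<noteq> 0" for u
    using inner[of "weight n u"] weight_le[of n u] that by fastforce
  ultimately have "weight n s = 0 \<or> weight n s = n" "weight n t = 0 \<or> weight n t = n"
    and "weight n s \<noteq> weight n t"
    using \<open>s \<noteq> t\<close> weight_eq_0_iff[of _ n] weight_eq_n_iff[of _ n] by metis+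
  then show False
    using edge \<open>lam (weight n s) \<noteq> 0\<close> \<open>lam (weight n t) \<noteq> 0\<close> by auto
qed

lemma eq_dicke_mix_of_symmetric_support:
  assumes lam: "\<forall>i\<le>n. lam i \<ge> 0" "(\<Sum>i\<le>n. lam i) = 1"
    and \<sigma>: "density n \<sigma>" and sym: "symmetric_support n \<sigma>"
    and H: "\<forall>S\<in>deletions n. ptrace n S \<sigma> = ptrace n S (dicke_mix n lam)"
    and diag: "\<And>s. \<sigma> s s = dicke_mix n lam s s" and edge: "lam 0 * lam n = 0"
  shows "\<sigma> = dicke_mix n lam"
proof (intro ext)
  fix s t
  show "\<sigma> s t = dicke_mix n lam s t"
  proof (cases "s \<in> bits n \<and> t \<in> bits n")
    case True
    show ?thesis
    proof (cases "weight n s = weight n t")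
      case same: True
      then have "\<sigma> s t = \<sigma> s s"
        using True by (intro symmetric_support_entry[OF \<sigma> sym]) simp_all
      then show ?thesis using diag[of s] True same by (simp add: dicke_mix_eq)
    next
      case False
      have "\<sigma> (prefix_ones 0) (prefix_ones 0) = 0 \<or> \<sigma> (prefix_ones n) (prefix_ones n) = 0"
        using edge by (simp add: diag dicke_mix_eq prefix_ones_in_bits)
      then have "\<sigma> (prefix_ones (weight n s)) (prefix_ones (weight n t)) = 0"
        using deletion_marginals_off_diagonal[OF \<sigma> sym H _ weight_le weight_le False] by blast
      moreover have "\<sigma> s t = \<sigma> (prefix_ones (weight n s)) (prefix_ones (weight n t))"
        using True by (intro symmetric_support_entry[OF \<sigma> sym]) (simp_all add: prefix_ones_in_bits weight_le)
      ultimately show ?thesis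
        using False by (simp add: dicke_mix_eq)
    qed
  next
    case False
    then show ?thesis
      using density_zero_outside[OF \<sigma>, of s t] density_zero_outside[OF density_dicke_mix[OF lam], of s t]
      by simp
  qed
qed

lemma eq_dicke_mix_of_deletion_marginals:
  assumes n: "2 \<le> n" and lam: "\<forall>i\<le>n. lam i \<ge> 0" "(\<Sum>i\<le>n. lam i) = 1"
    and \<sigma>: "density n \<sigma>" and H: "\<forall>S\<in>deletions n. ptrace n S \<sigma> = ptrace n S (dicke_mix n lam)"
    and edge: "lam 0 * lam n = 0"
    and odd: "i0 \<le> n" "odd i0" "lam i0 = 0" and even: "i1 \<le> n" "even i1" "lam i1 = 0"
  shows "\<sigma> = dicke_mix n lam"
proof -
  have \<rho>: "density n (dicke_mix n lam)"
    using lam by (rule density_dicke_mix)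
  have diag: "\<sigma> s s = dicke_mix n lam s s" for s
    using odd even
    by (intro deletion_marginals_determine_diag[OF \<sigma> \<rho> H, of "prefix_ones i0" "prefix_ones i1"])
      (simp_all add: prefix_ones_in_bits dicke_mix_eq)
  show ?thesis
  proof (cases "n = 2")
    case True
    then have "i0 = 1"
      using odd(1,2) by presburger
    with True odd(3) show ?thesis
      by (intro density_eq_of_diag_eq[OF \<sigma> \<rho> diag] dicke_mix_diag_sparse edge)
        (auto simp: less_2_cases_iff)
  next
    case False
    then have "symmetric_support n \<sigma>"
      using n by (intro symmetric_support_of_deletion_marginals[OF _ \<sigma> symmetric_support_dicke_mix H]) simp
    then show ?thesis
      using diag by (intro eq_dicke_mix_of_symmetric_support[OF lam \<sigma> _ H _ edge])
  qed
qed

section \<open>Perturbations invisible to the \<open>(n-1)\<close>-body marginals\<close>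

definition undetermined_by_marginals :: "nat \<Rightarrow> op \<Rightarrow> bool" where
  "undetermined_by_marginals n \<rho> \<longleftrightarrow>
     (\<exists>\<sigma>. density n \<sigma> \<and> \<sigma> \<noteq> \<rho> \<and> (\<forall>S. \<forall>j<n. j \<notin> S \<longrightarrow> ptrace n S \<sigma> = ptrace n S \<rho>))"

lemma undetermined_by_marginals_perturbation:
  assumes "density n (\<lambda>s t. \<rho> s t + x * \<tau> s t)" and "x \<noteq> 0" and "\<tau> s t \<noteq> 0"
    and "\<And>S j. j < n \<Longrightarrow> j \<notin> S \<Longrightarrow> ptrace n S \<tau> = (\<lambda>a b. 0)"
  shows "undetermined_by_marginals n \<rho>"
  unfolding undetermined_by_marginals_def
proof (intro exI conjI allI impI)
  show "(\<lambda>s t. \<rho> s t + x * \<tau> s t) \<noteq> \<rho>"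
  proof
    assume "(\<lambda>s t. \<rho> s t + x * \<tau> s t) = \<rho>"
    then have "\<rho> s t + x * \<tau> s t = \<rho> s t"
      by (rule fun_cong[OF fun_cong, of _ _ s t])
    then show False using assms(2,3) by simp
  qed
  show "ptrace n S (\<lambda>s t. \<rho> s t + x * \<tau> s t) = ptrace n S \<rho>" if "j < n" "j \<notin> S" for S j
    using assms(4)[OF that] by (simp add: fun_eq_iff ptrace_add_scaled)
qed (fact assms(1))

lemma sum_outer_labels_alternating:
  assumes "j < n" "j \<notin> S"
  shows "(\<Sum>c\<in>outer_labels n S. (-1 :: complex) ^ weight n c) = 0"
proof -
  let ?flip = "\<lambda>c. c(j := \<not> c j)"
  have sign: "(-1 :: complex) ^ weight n (?flip c) = - ((-1) ^ weight n c)" for c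
  proof (cases "c j")
    case True
    then have "weight n c = Suc (weight n (?flip c))"
      using weight_fun_upd_False[of j n c] assms(1) by simp
    then show ?thesis by simp
  next
    case False
    then show ?thesis
      using weight_fun_upd_True[of j n c] assms(1) by simp
  qed
  have "(\<Sum>c\<in>outer_labels n S. (-1 :: complex) ^ weight n c)
      = (\<Sum>c\<in>outer_labels n S. - ((-1) ^ weight n c))"
    by (rule sum.reindex_bij_witness[of _ ?flip ?flip])
      (use assms in \<open>auto simp: outer_labels_def sign fun_upd_in_bits\<close>)
  then show ?thesis by (simp add: sum_negf)
qed

lemma weight_disjoint_sup:
  "(\<And>i. \<not> (a i \<and> c i)) \<Longrightarrow> weight n (\<lambda>i. a i \<or> c i) = weight n a + weight n c"
  unfolding weight_def by (subst card_Un_disjoint[symmetric]) (auto intro: arg_cong[where f = card])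

lemma dicke_mix_add_scaled:
  "dicke_mix n (\<lambda>i. lam i + e * \<mu> i) s t = dicke_mix n lam s t + of_real e * dicke_mix n \<mu> s t"
  by (simp add: dicke_mix_def algebra_simps sum.distrib sum_distrib_left)

text \<open>The operator \<open>\<Sum>\<^sub>i (-1)\<^sup>i C(n,i) |D\<^sub>n\<^sup>i\<rangle>\<langle>D\<^sub>n\<^sup>i|\<close> has entries \<open>(-1)\<^sup>w\<close> between
  basis states of equal weight \<open>w\<close>; tracing out a single qubit pairs up entries of opposite sign.\<close>

lemma ptrace_alternating_dicke_mix:
  assumes j: "j < n" "j \<notin> S"
  shows "ptrace n S (dicke_mix n (\<lambda>i. (-1) ^ i * real (n choose i))) = (\<lambda>a b. 0)"
proof (intro ext)
  fix a b
  show "ptrace n S (dicke_mix n (\<lambda>i. (-1) ^ i * real (n choose i))) a b = 0"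
  proof (cases "(\<forall>i. a i \<longrightarrow> i \<in> S \<and> i < n) \<and> (\<forall>i. b i \<longrightarrow> i \<in> S \<and> i < n)")
    case True
    have "dicke_mix n (\<lambda>i. (-1) ^ i * real (n choose i)) (\<lambda>i. a i \<or> c i) (\<lambda>i. b i \<or> c i)
        = (if weight n a = weight n b then (-1) ^ weight n a else 0) * (-1) ^ weight n c"
      if c: "c \<in> outer_labels n S" for c
    proof -
      have "weight n (\<lambda>i. a i \<or> c i) = weight n a + weight n c"
        and "weight n (\<lambda>i. b i \<or> c i) = weight n b + weight n c"
        using True c by (auto simp: outer_labels_def intro!: weight_disjoint_sup)
      moreover have "(\<lambda>i. a i \<or> c i) \<in> bits n" "(\<lambda>i. b i \<or> c i) \<in> bits n"
        and "weight n a + weight n c \<le> n"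
        using True c weight_le[of n "\<lambda>i. a i \<or> c i"] calculation(1)
        by (auto simp: outer_labels_def bits_def)
      ultimately show ?thesis
        by (simp add: dicke_mix_eq power_add)
    qed
    then show ?thesis
      using True sum_outer_labels_alternating[OF j]
      by (simp add: ptrace_eq sum_distrib_left[symmetric])
  next
    case False
    then show ?thesis by (simp only: ptrace_eq if_False)
  qed
qed

definition ghz_coherence :: "nat \<Rightarrow> op" where
  "ghz_coherence n s t =
     (if s = (\<lambda>_. False) \<and> t = prefix_ones n \<or> s = prefix_ones n \<and> t = (\<lambda>_. False) then 1 else 0)"

lemma ptrace_ghz_coherence:
  assumes j: "j < n" "j \<notin> S"
  shows "ptrace n S (ghz_coherence n) = (\<lambda>a b. 0)"
proof (intro ext)
  fix a b
  have "ghz_coherence n (\<lambda>i. a i \<or> c i) (\<lambda>i. b i \<or> c i) = 0" if "\<not> a j" "\<not> b j" for c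
    using that j by (auto simp: ghz_coherence_def prefix_ones_def dest!: fun_cong[where x = j])
  moreover have "\<not> a j \<and> \<not> b j" if "\<forall>i. a i \<longrightarrow> i \<in> S \<and> i < n" "\<forall>i. b i \<longrightarrow> i \<in> S \<and> i < n"
    using that j by blast
  ultimately show "ptrace n S (ghz_coherence n) a b = 0"
    by (simp add: ptrace_eq)
qed

lemma qform_matrix_unit:
  assumes "p \<in> bits n" "q \<in> bits n"
  shows "qform n (\<lambda>s t. if s = p \<and> t = q then 1 else 0) v = cnj (v p) * v q"
proof -
  have "(\<Sum>t\<in>bits n. cnj (v s) * (if s = p \<and> t = q then 1 else 0) * v t)
      = (\<Sum>t\<in>bits n. if t = q then (if s = p then cnj (v p) * v q else 0) else 0)" for s
    by (intro sum.cong) auto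
  then show ?thesis
    using assms by (simp add: qform_def)
qed

lemma qform_ghz_coherence:
  assumes "1 \<le> n"
  shows "qform n (ghz_coherence n) v
    = cnj (v (\<lambda>_. False)) * v (prefix_ones n) + cnj (v (prefix_ones n)) * v (\<lambda>_. False)"
proof -
  have "(\<lambda>_. False) \<noteq> prefix_ones n"
    using assms by (auto simp: prefix_ones_def dest!: fun_cong[where x = 0])
  then have "ghz_coherence n = (\<lambda>s t. (if s = (\<lambda>_. False) \<and> t = prefix_ones n then 1 else 0)
      + 1 * (if s = prefix_ones n \<and> t = (\<lambda>_. False) then 1 else 0))"
    by (auto simp: ghz_coherence_def fun_eq_iff)
  then show ?thesis
    by (simp only: qform_add_scaled qform_matrix_unit zero_in_bits prefix_ones_in_bits order_refl)
      simp
qed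

lemma dicke_0: "dicke n 0 t = (if t = (\<lambda>_. False) then 1 else 0)"
  using weight_eq_0_iff[of t n] by (auto simp: dicke_def weight_def[symmetric])

lemma dicke_n: "dicke n n t = (if t = prefix_ones n then 1 else 0)"
  using weight_eq_n_iff[of t n] by (auto simp: dicke_def weight_def[symmetric] prefix_ones_in_bits)

lemma sum_bits_dicke_edges:
  "(\<Sum>t\<in>bits n. dicke n 0 t * v t) = v (\<lambda>_. False)"
  "(\<Sum>t\<in>bits n. dicke n n t * v t) = v (prefix_ones n)"
proof -
  have "(\<Sum>t\<in>bits n. (if t = p then 1 else 0) * v t) = v p" if "p \<in> bits n" for p
    using that by (subst sum.cong[OF refl, of _ _ "\<lambda>t. if t = p then v t else 0"]) simp_all
  then show "(\<Sum>t\<in>bits n. dicke n 0 t * v t) = v (\<lambda>_. False)"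
    and "(\<Sum>t\<in>bits n. dicke n n t * v t) = v (prefix_ones n)"
    by (simp_all add: dicke_0 dicke_n prefix_ones_in_bits)
qed

lemma cross_term_nonneg:
  fixes l0 l1 a b r :: real
  assumes "0 \<le> l0" "0 \<le> l1" "- (a * b) \<le> r"
  shows "0 \<le> l0 * a\<^sup>2 + l1 * b\<^sup>2 + 2 * sqrt (l0 * l1) * r"
proof -
  have "sqrt (l0 * l1) * - (a * b) \<le> sqrt (l0 * l1) * r"
    using assms by (intro mult_left_mono) simp_all
  moreover have "l0 * a\<^sup>2 + l1 * b\<^sup>2 - 2 * sqrt (l0 * l1) * (a * b) = (sqrt l0 * a - sqrt l1 * b)\<^sup>2"
    using assms(1,2) by (simp add: power2_eq_square real_sqrt_mult algebra_simps)
  moreover have "0 \<le> (sqrt l0 * a - sqrt l1 * b)\<^sup>2"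
    by simp
  ultimately show ?thesis
    by linarith
qed

lemma qform_dicke_mix_ghz:
  assumes "1 \<le> n"
  shows "qform n (\<lambda>s t. dicke_mix n lam s t + of_real c * ghz_coherence n s t) v
    = of_real ((\<Sum>i\<le>n. lam i * (cmod (\<Sum>t\<in>bits n. dicke n i t * v t))\<^sup>2)
        + 2 * c * Re (cnj (v (\<lambda>_. False)) * v (prefix_ones n)))"
proof -
  let ?z = "cnj (v (\<lambda>_. False)) * v (prefix_ones n)"
  have "qform n (\<lambda>s t. dicke_mix n lam s t + of_real c * ghz_coherence n s t) v
      = qform n (dicke_mix n lam) v + of_real c * qform n (ghz_coherence n) v"
    by (rule qform_add_scaled)
  also have "\<dots> = of_real (\<Sum>i\<le>n. lam i * (cmod (\<Sum>t\<in>bits n. dicke n i t * v t))\<^sup>2)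
      + of_real c * (?z + cnj ?z)"
    by (simp only: qform_dicke_mix qform_ghz_coherence[OF assms]) simp
  finally show ?thesis
    by (simp only: complex_add_cnj) simp
qed

text \<open>Only the terms \<open>i = 0\<close> and \<open>i = n\<close> of the Dicke mixture are needed to dominate the
  coherence: they contribute \<open>\<lambda>\<^sub>0 |v(0\<dots>0)|\<^sup>2 + \<lambda>\<^sub>n |v(1\<dots>1)|\<^sup>2\<close>.\<close>

lemma density_dicke_mix_ghz:
  assumes n: "1 \<le> n" and lam: "\<forall>i\<le>n. lam i \<ge> 0" "(\<Sum>i\<le>n. lam i) = 1"
  shows "density n (\<lambda>s t. dicke_mix n lam s t + of_real (sqrt (lam 0 * lam n)) * ghz_coherence n s t)"
proof -
  let ?\<rho> = "dicke_mix n lam"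
  let ?\<sigma> = "\<lambda>s t. ?\<rho> s t + of_real (sqrt (lam 0 * lam n)) * ghz_coherence n s t"
  have \<rho>: "density n ?\<rho>"
    using lam by (rule density_dicke_mix)
  have nonneg: "0 \<le> (\<Sum>i\<le>n. lam i * (cmod (\<Sum>t\<in>bits n. dicke n i t * v t))\<^sup>2)
      + 2 * sqrt (lam 0 * lam n) * Re (cnj (v (\<lambda>_. False)) * v (prefix_ones n))" for v
  proof -
    have "lam 0 * (cmod (v (\<lambda>_. False)))\<^sup>2 + lam n * (cmod (v (prefix_ones n)))\<^sup>2
        \<le> (\<Sum>i\<le>n. lam i * (cmod (\<Sum>t\<in>bits n. dicke n i t * v t))\<^sup>2)"
      using sum_mono2[of "{..n}" "{0, n}" "\<lambda>i. lam i * (cmod (\<Sum>t\<in>bits n. dicke n i t * v t))\<^sup>2"]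
        n lam(1) by (simp add: sum_bits_dicke_edges)
    moreover have "- (cmod (v (\<lambda>_. False)) * cmod (v (prefix_ones n)))
        \<le> Re (cnj (v (\<lambda>_. False)) * v (prefix_ones n))"
      using abs_Re_le_cmod[of "cnj (v (\<lambda>_. False)) * v (prefix_ones n)"] by (simp add: norm_mult)
    then have "0 \<le> lam 0 * (cmod (v (\<lambda>_. False)))\<^sup>2 + lam n * (cmod (v (prefix_ones n)))\<^sup>2
        + 2 * sqrt (lam 0 * lam n) * Re (cnj (v (\<lambda>_. False)) * v (prefix_ones n))"
      using lam(1) n by (intro cross_term_nonneg) simp_all
    ultimately show ?thesis by linarith
  qed
  have ne: "(\<lambda>_. False) \<noteq> prefix_ones n"
    using n by (auto simp: prefix_ones_def dest!: fun_cong[where x = 0])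
  show ?thesis
    unfolding density_iff_qform
  proof (intro conjI allI impI)
    show "?\<sigma> s t = 0" if "s \<notin> bits n \<or> t \<notin> bits n" for s t
      using that density_zero_outside[OF \<rho> that] by (auto simp: ghz_coherence_def prefix_ones_in_bits)
    show "?\<sigma> t s = cnj (?\<sigma> s t)" for s t
      using density_hermitian[OF \<rho>, of s t] by (auto simp: ghz_coherence_def)
    show "Im (qform n ?\<sigma> v) = 0" "Re (qform n ?\<sigma> v) \<ge> 0" for v
      using nonneg[of v] by (simp_all only: qform_dicke_mix_ghz[OF n] Im_complex_of_real Re_complex_of_real)
    have "ghz_coherence n s s = 0" for s
      using ne by (auto simp: ghz_coherence_def)
    then show "(\<Sum>s\<in>bits n. ?\<sigma> s s) = 1"
      using density_trace[OF \<rho>] by simp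
  qed
qed

lemma undetermined_by_marginals_ghz:
  assumes n: "1 \<le> n" and lam: "\<forall>i\<le>n. lam i \<ge> 0" "(\<Sum>i\<le>n. lam i) = 1" and edge: "lam 0 * lam n \<noteq> 0"
  shows "undetermined_by_marginals n (dicke_mix n lam)"
proof (rule undetermined_by_marginals_perturbation)
  show "density n (\<lambda>s t. dicke_mix n lam s t + of_real (sqrt (lam 0 * lam n)) * ghz_coherence n s t)"
    using n lam by (rule density_dicke_mix_ghz)
  show "complex_of_real (sqrt (lam 0 * lam n)) \<noteq> 0"
    using edge lam(1) by simp
  show "ghz_coherence n (\<lambda>_. False) (prefix_ones n) \<noteq> 0"
    by (simp add: ghz_coherence_def)
qed (rule ptrace_ghz_coherence)

lemma undetermined_by_marginals_alternating:
  assumes n: "1 \<le> n" and lam: "(\<Sum>i\<le>n. lam i) = 1" and e: "e \<noteq> 0"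
    and nonneg: "\<forall>i\<le>n. lam i + e * ((-1) ^ i * real (n choose i)) \<ge> 0"
  shows "undetermined_by_marginals n (dicke_mix n lam)"
proof (rule undetermined_by_marginals_perturbation)
  have "(\<Sum>i\<le>n. lam i + e * ((-1) ^ i * real (n choose i))) = 1"
    using lam choose_alternating_sum[where 'a = real, of n] n
    by (simp add: sum.distrib sum_distrib_left[symmetric])
  then have "density n (dicke_mix n (\<lambda>i. lam i + e * ((-1) ^ i * real (n choose i))))"
    using nonneg by (intro density_dicke_mix) simp_all
  then show "density n (\<lambda>s t. dicke_mix n lam s t
      + of_real e * dicke_mix n (\<lambda>i. (-1) ^ i * real (n choose i)) s t)"
    by (simp only: dicke_mix_add_scaled[abs_def])
  show "complex_of_real e \<noteq> 0"
    using e by simp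
  show "dicke_mix n (\<lambda>i. (-1) ^ i * real (n choose i)) (\<lambda>_. False) (\<lambda>_. False) \<noteq> 0"
    by (simp add: dicke_mix_eq)
qed (rule ptrace_alternating_dicke_mix)

lemma exists_small_shift:
  fixes lam c :: "'a \<Rightarrow> real"
  assumes "finite I" and "\<And>i. i \<in> I \<Longrightarrow> 0 < lam i"
  shows "\<exists>d>0. \<forall>i\<in>I. d * c i \<le> lam i"
proof (intro exI conjI ballI)
  let ?d = "Min (insert 1 ((\<lambda>i. lam i / (\<bar>c i\<bar> + 1)) ` I))"
  show "0 < ?d"
    using assms by (simp add: Min_gr_iff)
  fix i assume i: "i \<in> I"
  have "?d \<le> lam i / (\<bar>c i\<bar> + 1)"
    using assms(1) i by (intro Min_le) auto
  then have "?d * (\<bar>c i\<bar> + 1) \<le> lam i"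
    by (simp add: le_divide_eq add_pos_nonneg)
  moreover have "?d * c i \<le> ?d * (\<bar>c i\<bar> + 1)"
    using \<open>0 < ?d\<close> by (intro mult_left_mono) auto
  ultimately show "?d * c i \<le> lam i" by linarith
qed

lemma undetermined_by_marginals_parity:
  assumes n: "1 \<le> n" and lam: "\<forall>i\<le>n. lam i \<ge> 0" "(\<Sum>i\<le>n. lam i) = 1"
    and nz: "\<forall>i\<le>n. even (i + q) \<longrightarrow> lam i \<noteq> 0"
  shows "undetermined_by_marginals n (dicke_mix n lam)"
proof -
  have "\<exists>d>0. \<forall>i\<in>{i. i \<le> n \<and> even (i + q)}. d * real (n choose i) \<le> lam i"
    by (rule exists_small_shift) (use nz lam(1) in \<open>auto simp: less_le\<close>)
  then obtain d where d: "d > 0" "\<forall>i\<in>{i. i \<le> n \<and> even (i + q)}. d * real (n choose i) \<le> lam i"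
    by blast
  show ?thesis
  proof (rule undetermined_by_marginals_alternating[OF n lam(2)])
    show "\<forall>i\<le>n. lam i + ((-1) ^ Suc q * d) * ((-1) ^ i * real (n choose i)) \<ge> 0"
    proof (intro allI impI)
      fix i assume i: "i \<le> n"
      have "lam i + ((-1) ^ Suc q * d) * ((-1) ^ i * real (n choose i))
          = lam i - (-1) ^ (i + q) * (d * real (n choose i))"
        by (simp add: power_add algebra_simps)
      also have "\<dots> \<ge> 0"
      proof (cases "even (i + q)")
        case True
        then show ?thesis using d(2) i by simp
      next
        case False
        then show ?thesis using d(1) lam(1) i by (simp add: add_nonneg_nonneg)
      qed
      finally show "lam i + ((-1) ^ Suc q * d) * ((-1) ^ i * real (n choose i)) \<ge> 0" .
    qed
  qed (use d in simp)
qed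

lemma undetermined_by_marginals_dicke_mix:
  assumes n: "1 \<le> n" and lam: "\<forall>i\<le>n. lam i \<ge> 0" "(\<Sum>i\<le>n. lam i) = 1"
    and cond: "lam 0 * lam n \<noteq> 0 \<or> (\<forall>i\<le>n. odd i \<longrightarrow> lam i \<noteq> 0) \<or> (\<forall>i\<le>n. even i \<longrightarrow> lam i \<noteq> 0)"
  shows "undetermined_by_marginals n (dicke_mix n lam)"
  using cond
proof (elim disjE)
  assume "lam 0 * lam n \<noteq> 0"
  then show ?thesis using n lam by (intro undetermined_by_marginals_ghz)
next
  assume "\<forall>i\<le>n. odd i \<longrightarrow> lam i \<noteq> 0"
  then show ?thesis using n lam by (intro undetermined_by_marginals_parity[where q = 1]) simp_all
next
  assume "\<forall>i\<le>n. even i \<longrightarrow> lam i \<noteq> 0"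
  then show ?thesis using n lam by (intro undetermined_by_marginals_parity[where q = 0]) simp_all
qed

section \<open>The value of \<open>L\<close>\<close>

lemma determinesI:
  assumes "density n \<rho>"
    and "\<And>\<sigma>. density n \<sigma> \<Longrightarrow> \<forall>S\<in>SS. ptrace n S \<sigma> = ptrace n S \<rho> \<Longrightarrow> \<sigma> = \<rho>"
  shows "determines n SS \<rho>"
  using assms by (auto simp: determines_def compat_def)

lemma Lval_le:
  "SS \<subseteq> Pow {0..<n} \<Longrightarrow> determines n SS \<rho> \<Longrightarrow> \<forall>S\<in>SS. card S \<le> k \<Longrightarrow> Lval n \<rho> \<le> k"
  unfolding Lval_def by (rule Least_le) blast

lemma Lval_less_if_determined_by_deletions:
  assumes "0 < n" and "determines n (deletions n) \<rho>"
  shows "Lval n \<rho> < n"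
proof -
  have "Lval n \<rho> \<le> n - 1"
    by (rule Lval_le[OF _ assms(2)]) (auto simp: deletions_def)
  then show ?thesis using assms(1) by simp
qed

lemma Lval_eq_if_undetermined:
  assumes \<rho>: "density n \<rho>" and "undetermined_by_marginals n \<rho>"
  shows "Lval n \<rho> = n"
proof -
  obtain \<sigma> where \<sigma>: "density n \<sigma>" "\<sigma> \<noteq> \<rho>"
    and marg: "\<And>S j. j < n \<Longrightarrow> j \<notin> S \<Longrightarrow> ptrace n S \<sigma> = ptrace n S \<rho>"
    using assms(2) unfolding undetermined_by_marginals_def by blast
  have full: "ptrace n {0..<n} \<tau> = \<tau>" if "density n \<tau>" for \<tau>
    using that by (intro ptrace_full) (rule density_zero_outside)
  have "determines n {{0..<n}} \<rho>"
    using \<rho> by (rule determinesI) (use full \<rho> in simp)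
  show ?thesis
    unfolding Lval_def
  proof (rule Least_equality)
    show "\<exists>SS. SS \<subseteq> Pow {0..<n} \<and> determines n SS \<rho> \<and> (\<forall>S\<in>SS. card S \<le> n)"
      using \<open>determines n {{0..<n}} \<rho>\<close> by (intro exI[of _ "{{0..<n}}"]) auto
    fix k assume "\<exists>SS. SS \<subseteq> Pow {0..<n} \<and> determines n SS \<rho> \<and> (\<forall>S\<in>SS. card S \<le> k)"
    then obtain SS where SS: "SS \<subseteq> Pow {0..<n}" "determines n SS \<rho>" "\<forall>S\<in>SS. card S \<le> k"
      by blast
    show "n \<le> k"
    proof (rule ccontr)
      assume "\<not> n \<le> k"
      have "\<exists>j<n. j \<notin> S" if S: "S \<in> SS" for S
      proof (rule ccontr)
        assume "\<not> (\<exists>j<n. j \<notin> S)"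
        then have "{0..<n} \<subseteq> S" by auto
        moreover have "finite S"
          using S SS(1) by (auto intro: finite_subset[of S "{0..<n}"])
        ultimately have "card {0..<n} \<le> card S"
          by (rule card_mono[rotated])
        then show False
          using S SS(3) \<open>\<not> n \<le> k\<close> by force
      qed
      then have "\<sigma> \<in> compat n \<rho> SS"
        using \<sigma>(1) marg by (auto simp: compat_def)
      then show False
        using SS(2) \<sigma>(2) by (simp add: determines_def)
    qed
  qed
qed

theorem mainTheorem19:
  fixes n :: nat and lam :: "nat \<Rightarrow> real"
  assumes "n \<ge> 2"
    and "\<forall>i\<le>n. lam i \<ge> 0"
    and "(\<Sum>i\<le>n. lam i) = 1"
  shows "Lval n (dicke_mix n lam) = n \<longleftrightarrow>
           (lam 0 * lam n \<noteq> 0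
            \<or> (\<forall>i\<le>n. odd i \<longrightarrow> lam i \<noteq> 0)
            \<or> (\<forall>i\<le>n. even i \<longrightarrow> lam i \<noteq> 0))"
proof
  assume L: "Lval n (dicke_mix n lam) = n"
  show "lam 0 * lam n \<noteq> 0 \<or> (\<forall>i\<le>n. odd i \<longrightarrow> lam i \<noteq> 0) \<or> (\<forall>i\<le>n. even i \<longrightarrow> lam i \<noteq> 0)"
  proof (rule ccontr)
    assume "\<not> ?thesis"
    then obtain i0 i1 where edge: "lam 0 * lam n = 0"
      and odd: "i0 \<le> n" "odd i0" "lam i0 = 0" and even: "i1 \<le> n" "even i1" "lam i1 = 0"
      by blast
    have "determines n (deletions n) (dicke_mix n lam)"
      using density_dicke_mix[OF assms(2,3)]
    proof (rule determinesI)
      show "\<sigma> = dicke_mix n lam"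
        if "density n \<sigma>" "\<forall>S\<in>deletions n. ptrace n S \<sigma> = ptrace n S (dicke_mix n lam)" for \<sigma>
        using eq_dicke_mix_of_deletion_marginals[OF assms that edge odd even] .
    qed
    then have "Lval n (dicke_mix n lam) < n"
      using assms(1) by (intro Lval_less_if_determined_by_deletions) simp_all
    then show False using L by simp
  qed
next
  assume "lam 0 * lam n \<noteq> 0 \<or> (\<forall>i\<le>n. odd i \<longrightarrow> lam i \<noteq> 0) \<or> (\<forall>i\<le>n. even i \<longrightarrow> lam i \<noteq> 0)"
  then have "undetermined_by_marginals n (dicke_mix n lam)"
    using assms by (intro undetermined_by_marginals_dicke_mix) simp_all
  then show "Lval n (dicke_mix n lam) = n"
    using density_dicke_mix[OF assms(2,3)] by (intro Lval_eq_if_undetermined)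
qed

end
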